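(* Let $\alpha,s,t\in\mathbb{C}$ with $w=\tfrac12(s+t)$ and $l+w\neq0$ for all $l\in\mathbb{Z}$. For all $u,v\in\mathbb{C}$ and all $a,b,c\in\mathbb{Z}$ with $|a-b|=|b-c|=1$, $$R^{(1,1)}(u-v)\,\psi^{(1)}(u)^a_b\otimes\psi^{(1)}(v)^b_c=\sum_{b'\in\mathbb{Z}}\psi^{(1)}(u)^{b'}_c\otimes\psi^{(1)}(v)^a_{b'}\,W^{(1,1)}\left(\begin{smallmatrix} a& b\\ b'& c\end{smallmatrix}\middle|u-v\right).$$
   Context: $\mathbb{C}^2$ has basis $e_1,e_2$ (vectors written as coordinate columns) and $\mathbb{C}^2\otimes\mathbb{C}^2$ has ordered basis $e_1\otimes e_1,e_1\otimes e_2,e_2\otimes e_1,e_2\otimes e_2$, in which $$R^{(1,1)}(u)=\begin{pmatrix}u+1&0&0&0\\0&u&1&0\\0&1&u&0\\ \alpha^2u(u+1)&0&0&u+1\end{pmatrix}$$ (the rational seven-vertex $R$-matrix). Intertwining vectors: $\psi^{(1)}(u)^l_{l+1}=\begin{pmatrix}1\\ \alpha(u-l-t)\end{pmatrix}$, $\psi^{(1)}(u)^l_{l-1}=\begin{pmatrix}1\\ \alpha(u+l+s)\end{pmatrix}$, $\psi^{(1)}(u)^a_b=0$ if $|a-b|\neq1$. The weights $W^{(1,1)}\left(\begin{smallmatrix} a& b\\ d& c\end{smallmatrix}\middle|u\right)$ are zero unless $|a-b|=|b-c|=|c-d|=|d-a|=1$, and for $l\in\mathbb{Z}$ (both sign choices):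 $W^{(1,1)}\left(\begin{smallmatrix} l\pm2& l\pm1\\ l\pm1& l\end{smallmatrix}\middle|u\right)=u+1$, $W^{(1,1)}\left(\begin{smallmatrix} l& l\pm1\\ l\pm1& l\end{smallmatrix}\middle|u\right)=\frac{\mp u+l+w}{l+w}$, $W^{(1,1)}\left(\begin{smallmatrix} l& l\pm1\\ l\mp1& l\end{smallmatrix}\middle|u\right)=\frac{u(l\pm1+w)}{l+w}$. *)

theory Defs
  imports "HOL-Analysis.Analysis"
begin

text \<open>Vectors in C^2 are functions nat => complex with components 0,1 (for e1,e2);
vectors in C^2 (x) C^2 are functions nat => complex with components 0..3 in the
ordered basis e1e1, e1e2, e2e1, e2e2.\<close>

definition Rmat :: "complex \<Rightarrow> complex \<Rightarrow> nat \<Rightarrow> nat \<Rightarrow> complex" where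
  "Rmat \<alpha> u i j =
     [[u + 1, 0, 0, 0],
      [0, u, 1, 0],
      [0, 1, u, 0],
      [\<alpha>\<^sup>2 * u * (u + 1), 0, 0, u + 1]] ! i ! j"

definition mv :: "(nat \<Rightarrow> nat \<Rightarrow> complex) \<Rightarrow> (nat \<Rightarrow> complex) \<Rightarrow> nat \<Rightarrow> complex" where
  "mv M x i = (\<Sum>j<4. M i j * x j)"

definition tens :: "(nat \<Rightarrow> complex) \<Rightarrow> (nat \<Rightarrow> complex) \<Rightarrow> nat \<Rightarrow> complex" where
  "tens x y i = x (i div 2) * y (i mod 2)"

definition psi :: "complex \<Rightarrow> complex \<Rightarrow> complex \<Rightarrow> complex \<Rightarrow> int \<Rightarrow> int \<Rightarrow> nat \<Rightarrow> complex" where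
  "psi \<alpha> s t u a b k =
     (if b = a + 1 then (if k = 0 then 1 else if k = 1 then \<alpha> * (u - of_int a - t) else 0)
      else if b = a - 1 then (if k = 0 then 1 else if k = 1 then \<alpha> * (u + of_int a + s) else 0)
      else 0)"

text \<open>W s t a b d c u = W^(1,1)( a b / d c | u ), with w = (s+t)/2.\<close>
definition W :: "complex \<Rightarrow> complex \<Rightarrow> int \<Rightarrow> int \<Rightarrow> int \<Rightarrow> int \<Rightarrow> complex \<Rightarrow> complex" where
  "W s t a b d c u =
     (let w = (s + t) / 2 in
      if \<bar>a - b\<bar> = 1 \<and> \<bar>b - c\<bar> = 1 \<and> \<bar>c - d\<bar> = 1 \<and> \<bar>d - a\<bar> = 1 then
        (if a \<noteq> c then u + 1
         else if b = d then (- of_int (b - a) * u + of_int a + w) / (of_int a + w)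
         else u * (of_int b + w) / (of_int a + w))
      else 0)"

end

theory Submission
  imports Defs
begin

text \<open>Since \<psi>(u)^{b'}_c vanishes unless b' = c \<plusminus> 1, the infinite sum has only two
  terms, and the face relation becomes a finite identity between rational functions,
  verified in each of the eight configurations b = a \<plusminus> 1, c = b \<plusminus> 1.\<close>

lemma sum_lessThan_4: "(\<Sum>j<4::nat. f j) = f 0 + f 1 + f 2 + (f 3 :: 'a::comm_monoid_add)"
  by (simp add: numeral_eq_Suc)

lemma infsum_two_points:
  fixes f :: "'a \<Rightarrow> 'b::{topological_comm_monoid_add, t2_space}"
  assumes "p \<noteq> q" and "\<And>x. x \<notin> {p, q} \<Longrightarrow> f x = 0"
  shows "(\<Sum>\<^sub>\<infinity>x. f x) = f p + f q"
proof -
  have "(\<Sum>\<^sub>\<infinity>x. f x) = (\<Sum>\<^sub>\<infinity>x\<in>{p, q}. f x)"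
    by (rule infsum_cong_neutral) (use assms(2) in auto)
  also have "\<dots> = f p + f q"
    using assms(1) by simp
  finally show ?thesis .
qed

lemma psi_nonadjacent: "\<bar>a - b\<bar> \<noteq> 1 \<Longrightarrow> psi \<alpha> s t u a b k = 0"
  by (auto simp: psi_def)

lemma face_relation_two_terms:
  fixes \<alpha> s t u v :: complex and a b c :: int
  assumes ne: "of_int a + (s + t) / 2 \<noteq> 0"
    and ab: "b = a + 1 \<or> b = a - 1" and bc: "c = b + 1 \<or> c = b - 1" and i: "i < 4"
  shows "mv (Rmat \<alpha> (u - v)) (tens (psi \<alpha> s t u a b) (psi \<alpha> s t v b c)) i
     = tens (psi \<alpha> s t u (c - 1) c) (psi \<alpha> s t v a (c - 1)) i * W s t a b (c - 1) c (u - v)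
     + tens (psi \<alpha> s t u (c + 1) c) (psi \<alpha> s t v a (c + 1)) i * W s t a b (c + 1) c (u - v)"
proof -
  text \<open>Eliminating t in favour of the atom D = a + w lets field_simps clear the
    denominators of the weights.\<close>
  define D where "D = of_int a + (s + t) / 2"
  have D_ne: "D \<noteq> 0"
    using ne by (simp add: D_def)
  have w: "(s + t) / 2 = D - of_int a" and t: "t = 2 * D - 2 * of_int a - s"
    by (simp_all add: D_def field_simps)
  have "i = 0 \<or> i = 1 \<or> i = 2 \<or> i = 3"
    using i by auto
  with ab bc show ?thesis
    apply (elim disjE)
      apply (simp_all add: mv_def sum_lessThan_4 Rmat_def tens_def psi_def W_def Let_def w)
     apply (simp_all add: t field_simps D_ne)
    apply (simp_all add: algebra_simps power2_eq_square)
    done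
qed

theorem mainTheorem4:
  fixes \<alpha> s t :: complex
  assumes "\<forall>l::int. of_int l + (s + t) / 2 \<noteq> 0"
  shows "\<forall>(u::complex) (v::complex) (a::int) (b::int) (c::int).
           \<bar>a - b\<bar> = 1 \<and> \<bar>b - c\<bar> = 1 \<longrightarrow>
           (\<forall>i<4. mv (Rmat \<alpha> (u - v)) (tens (psi \<alpha> s t u a b) (psi \<alpha> s t v b c)) i
              = (\<Sum>\<^sub>\<infinity>b'::int. tens (psi \<alpha> s t u b' c) (psi \<alpha> s t v a b') i
                                  * W s t a b b' c (u - v)))"
proof (intro allI impI)
  fix u v :: complex and a b c :: int and i :: nat
  assume adj: "\<bar>a - b\<bar> = 1 \<and> \<bar>b - c\<bar> = 1" and i: "i < 4"
  then have ab: "b = a + 1 \<or> b = a - 1" and bc: "c = b + 1 \<or> c = b - 1"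
    by auto
  have "(\<Sum>\<^sub>\<infinity>b'::int. tens (psi \<alpha> s t u b' c) (psi \<alpha> s t v a b') i * W s t a b b' c (u - v))
      = tens (psi \<alpha> s t u (c - 1) c) (psi \<alpha> s t v a (c - 1)) i * W s t a b (c - 1) c (u - v)
      + tens (psi \<alpha> s t u (c + 1) c) (psi \<alpha> s t v a (c + 1)) i * W s t a b (c + 1) c (u - v)"
    by (rule infsum_two_points) (auto simp: tens_def psi_nonadjacent)
  then show "mv (Rmat \<alpha> (u - v)) (tens (psi \<alpha> s t u a b) (psi \<alpha> s t v b c)) i
      = (\<Sum>\<^sub>\<infinity>b'::int. tens (psi \<alpha> s t u b' c) (psi \<alpha> s t v a b') i * W s t a b b' c (u - v))"
    using face_relation_two_terms[OF assms[rule_format, of a] ab bc i] by simp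
qed

end
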